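(* Let $f_1,g_1:\mathbb{R}^n\to\Delta_k$ be measurable. Then there exist explicitly defined $f_2,g_2:\mathbb{R}^{n+2}\to[k]$ (with $[k]$ identified with $\{\mathbf{e}_1,\dots,\mathbf{e}_k\}\subset\mathbb{R}^k$) such that (1) $\mathbf{E}[f_2]=\mathbf{E}[f_1]$ and $\mathbf{E}[g_2]=\mathbf{E}[g_1]$; (2) for every $t\ge 0$ and all $1\le j,\ell\le k$, $\mathbf{E}[f_{1,j}\,P_t g_{1,\ell}]=\mathbf{E}[f_{2,j}\,P_t g_{2,\ell}]$. Further, $f_2$ depends only on $f_1$ and $g_2$ depends only on $g_1$.
   Context: $\Delta_k$ is the convex hull of the standard unit vectors $\mathbf{e}_1,\dots,\mathbf{e}_k$ of $\mathbb{R}^k$. All expectations are with respect to the standard Gaussian measure $\gamma_m$ on the relevant space $\mathbb{R}^m$ ($m=n$ or $m=n+2$). For a function $h=(h_1,\dots,h_k):\mathbb{R}^m\to\mathbb{R}^k$, $h_j$ denotes its $j$-th coordinate. The Ornstein–Uhlenbeck operator is $(P_t h)(x)=\int h(e^{-t}x+\sqrt{1-e^{-2t}}\,y)\,d\gamma_m(y)$. *)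

theory Defs
  imports "HOL-Analysis.Analysis"
begin

definition std_gauss :: "'a::euclidean_space measure" where
  "std_gauss = density lborel
     (\<lambda>x. ennreal ((2 * pi) powr (- real DIM('a) / 2) * exp (- (norm x)\<^sup>2 / 2)))"

definition OU :: "real \<Rightarrow> ('a::euclidean_space \<Rightarrow> real) \<Rightarrow> 'a \<Rightarrow> real" where
  "OU t h x = (\<integral>y. h (exp (- t) *\<^sub>R x + sqrt (1 - exp (- 2 * t)) *\<^sub>R y) \<partial>std_gauss)"

definition simplex_k :: "(real ^ 'k::finite) set" where
  "simplex_k = convex hull (range (\<lambda>i. axis i 1))"

definition vertices_k :: "(real ^ 'k::finite) set" where
  "vertices_k = range (\<lambda>i. axis i 1)"

end

theory Submission
  imports Defs "HOL-Probability.Probability"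
begin

text \<open>
  Let \<open>\<Phi>\<close> be the distribution function of the one-dimensional standard Gaussian, so that
  \<open>\<Phi>(y)\<close> is uniform on \<open>[0,1]\<close> when \<open>y\<close> is standard Gaussian. Put
  \<open>f\<^sub>2(x, y\<^sub>1, y\<^sub>2) = e\<^sub>J\<close>, where \<open>J\<close> is sampled from the probability vector \<open>f\<^sub>1(x)\<close> by
  inverting its cumulative distribution at \<open>\<Phi>(y\<^sub>1)\<close>, and define \<open>g\<^sub>2\<close> in the same way from
  \<open>g\<^sub>1\<close> and \<open>y\<^sub>2\<close>. Averaging over the extra coordinate returns \<open>f\<^sub>1(x)\<close> (resp.\ \<open>g\<^sub>1(x)\<close>),
  which gives the means. The Ornstein-Uhlenbeck operator acts coordinatewise on
  \<open>\<real>\<^sup>n \<times> \<real> \<times> \<real>\<close>, so \<open>P\<^sub>t g\<^sub>2\<close> does not depend on \<open>y\<^sub>1\<close>, and integrating it over \<open>y\<^sub>2\<close>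
  gives \<open>P\<^sub>t g\<^sub>1\<close> because \<open>e\<^sup>-\<^sup>t Y + (1 - e\<^sup>-\<^sup>2\<^sup>t)\<^sup>1\<^sup>/\<^sup>2 W\<close> is again standard Gaussian. Since
  \<open>f\<^sub>2\<close> depends only on \<open>(x, y\<^sub>1)\<close>, the correlation \<open>E[f\<^sub>2\<^sub>,\<^sub>j P\<^sub>t g\<^sub>2\<^sub>,\<^sub>\<ell>]\<close> reduces to
  \<open>E[f\<^sub>1\<^sub>,\<^sub>j P\<^sub>t g\<^sub>1\<^sub>,\<^sub>\<ell>]\<close>.
\<close>

section \<open>The standard Gaussian measure\<close>

lemma sets_std_gauss [simp, measurable_cong]: "sets (std_gauss :: 'a::euclidean_space measure) = sets borel"
  by (simp add: std_gauss_def)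

lemma space_std_gauss [simp]: "space (std_gauss :: 'a::euclidean_space measure) = UNIV"
  by (simp add: std_gauss_def)

lemma std_gauss_density_eq_prod:
  fixes x :: "'a::euclidean_space"
  shows "(2 * pi) powr (- real DIM('a) / 2) * exp (- (norm x)\<^sup>2 / 2) =
    (\<Prod>b\<in>Basis. std_normal_density (x \<bullet> b))"
proof -
  let ?c = "(2 * pi) powr (- 1 / 2) :: real"
  have "(norm x)\<^sup>2 = (\<Sum>b\<in>Basis. (x \<bullet> b)\<^sup>2)"
    unfolding power2_norm_eq_inner euclidean_inner[of x x] by (simp only: power2_eq_square)
  moreover have "exp (- (\<Sum>b\<in>Basis. (x \<bullet> b)\<^sup>2) / 2) = (\<Prod>b\<in>Basis. exp (- (x \<bullet> b)\<^sup>2 / 2))"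
    by (simp add: exp_sum[symmetric] sum_negf sum_divide_distrib)
  moreover have "(2 * pi) powr (- real DIM('a) / 2) = (\<Prod>b\<in>(Basis::'a set). ?c)"
    by (simp add: powr_power)
  moreover have "std_normal_density u = ?c * exp (- u\<^sup>2 / 2)" for u
    unfolding normal_density_def by (simp add: powr_minus_divide powr_half_sqrt)
  ultimately show ?thesis
    by (simp only: prod.distrib)
qed

lemma std_gauss_real: "std_gauss = std_normal_distribution"
  unfolding std_gauss_def using std_gauss_density_eq_prod[where 'a=real] by simp

lemma prob_space_std_gauss: "prob_space (std_gauss :: 'a::euclidean_space measure)"
proof
  have "emeasure (std_gauss :: 'a measure) UNIV =
      (\<integral>\<^sup>+(x::'a). ennreal (\<Prod>b\<in>Basis. std_normal_density (x \<bullet> b)) \<partial>lborel)"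
    unfolding std_gauss_def std_gauss_density_eq_prod by (simp add: emeasure_density)
  also have "\<dots> = (\<integral>\<^sup>+(x::'a). (\<Prod>b\<in>Basis. ennreal (std_normal_density (x \<bullet> b))) \<partial>lborel)"
    by (simp add: prod_ennreal)
  also have "\<dots> = (\<Prod>b\<in>(Basis::'a set). \<integral>\<^sup>+u. ennreal (std_normal_density u) \<partial>lborel)"
    by (rule nn_integral_lborel_prod) auto
  also have "\<dots> = 1"
    using prob_space.emeasure_space_1[OF prob_space_normal_density[of 1 0]] by (simp add: emeasure_density)
  finally show "emeasure std_gauss (space (std_gauss :: 'a measure)) = 1" by simp
qed

interpretation std_gauss: prob_space "std_gauss :: 'a::euclidean_space measure"
  by (rule prob_space_std_gauss)

lemma measure_std_gauss_UNIV [simp]: "measure (std_gauss :: 'a::euclidean_space measure) UNIV = 1"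
  using std_gauss.prob_space by simp

lemma std_gauss_pair:
  "(std_gauss :: ('a::euclidean_space \<times> 'b::euclidean_space) measure) = std_gauss \<Otimes>\<^sub>M std_gauss"
proof -
  define f where "f = (\<lambda>x::'a. ennreal ((2 * pi) powr (- real DIM('a) / 2) * exp (- (norm x)\<^sup>2 / 2)))"
  define g where "g = (\<lambda>y::'b. ennreal ((2 * pi) powr (- real DIM('b) / 2) * exp (- (norm y)\<^sup>2 / 2)))"
  have "(std_gauss :: 'a measure) \<Otimes>\<^sub>M (std_gauss :: 'b measure) = density (lborel \<Otimes>\<^sub>M lborel) (\<lambda>(x, y). f x * g y)"
    unfolding std_gauss_def f_def[symmetric] g_def[symmetric]
  proof (rule pair_measure_density)
    show "sigma_finite_measure (density lborel g)"
      using std_gauss.sigma_finite_measure_axioms[where 'a='b] unfolding std_gauss_def g_def .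
  qed (auto simp: f_def g_def lborel.sigma_finite_measure_axioms)
  also have "\<dots> = std_gauss"
    unfolding lborel_prod std_gauss_def
  proof (intro arg_cong[where f="density lborel"] ext, clarify)
    fix x :: 'a and y :: 'b
    have "(2 * pi) powr (- real (DIM('a) + DIM('b)) / 2) =
        (2 * pi) powr (- real DIM('a) / 2) * (2 * pi) powr (- real DIM('b) / 2)"
      by (simp add: powr_add[symmetric] add_divide_distrib diff_divide_distrib)
    moreover have "exp (- (norm (x, y))\<^sup>2 / 2) = exp (- (norm x)\<^sup>2 / 2) * exp (- (norm y)\<^sup>2 / 2)"
      by (simp add: norm_Pair exp_add[symmetric] add_divide_distrib)
    ultimately show "f x * g y = ennreal ((2 * pi) powr (- real DIM('a \<times> 'b) / 2) * exp (- (norm (x, y))\<^sup>2 / 2))"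
      by (simp add: f_def g_def ennreal_mult[symmetric] mult_ac)
  qed
  finally show ?thesis ..
qed

lemma sets_std_gauss_pair:
  "sets ((std_gauss :: 'a::euclidean_space measure) \<Otimes>\<^sub>M (std_gauss :: 'b::euclidean_space measure)) = sets borel"
  unfolding std_gauss_pair[symmetric] by simp

lemma integral_std_gauss_pair:
  fixes G :: "'a::euclidean_space \<times> 'b::euclidean_space \<Rightarrow> 'c::{banach, second_countable_topology}"
  assumes [measurable]: "G \<in> borel_measurable borel" and bound: "\<And>z. norm (G z) \<le> B"
  shows "(\<integral>z. G z \<partial>std_gauss) = (\<integral>x. \<integral>y. G (x, y) \<partial>std_gauss \<partial>std_gauss)"
proof -
  interpret P: pair_prob_space "std_gauss :: 'a measure" "std_gauss :: 'b measure" ..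
  have "integrable (std_gauss \<Otimes>\<^sub>M std_gauss) G"
    using bound measurable_cong_sets[OF sets_std_gauss_pair refl, of borel]
    by (intro P.integrable_const_bound[where B=B]) auto
  then show ?thesis
    by (simp add: P.integral_fst' std_gauss_pair)
qed

lemma integral_std_gauss_fst:
  fixes h :: "'a::euclidean_space \<Rightarrow> 'c::{banach, second_countable_topology}"
  assumes [measurable]: "h \<in> borel_measurable borel" and "\<And>x. norm (h x) \<le> B"
  shows "(\<integral>z. h (fst z) \<partial>(std_gauss :: ('a \<times> 'b::euclidean_space) measure)) = (\<integral>x. h x \<partial>std_gauss)"
proof -
  have "(\<lambda>z::'a \<times> 'b. h (fst z)) \<in> borel_measurable borel"
    unfolding borel_prod[symmetric] by measurable
  then show ?thesis
    using assms by (subst integral_std_gauss_pair[where B=B]) auto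
qed

lemma integral_std_gauss_snd:
  fixes h :: "'b::euclidean_space \<Rightarrow> 'c::{banach, second_countable_topology}"
  assumes [measurable]: "h \<in> borel_measurable borel" and "\<And>x. norm (h x) \<le> B"
  shows "(\<integral>z. h (snd z) \<partial>(std_gauss :: ('a::euclidean_space \<times> 'b) measure)) = (\<integral>x. h x \<partial>std_gauss)"
proof -
  have "(\<lambda>z::'a \<times> 'b. h (snd z)) \<in> borel_measurable borel"
    unfolding borel_prod[symmetric] by measurable
  then show ?thesis
    using assms by (subst integral_std_gauss_pair[where B=B]) auto
qed

lemma integral_std_gauss_swap:
  fixes G :: "'a::euclidean_space \<Rightarrow> 'b::euclidean_space \<Rightarrow> real"
  assumes "(\<lambda>z. G (fst z) (snd z)) \<in> borel_measurable borel" and bound: "\<And>x y. \<bar>G x y\<bar> \<le> B"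
  shows "(\<integral>y. \<integral>x. G x y \<partial>std_gauss \<partial>std_gauss) = (\<integral>x. \<integral>y. G x y \<partial>std_gauss \<partial>std_gauss)"
proof -
  interpret P: pair_prob_space "std_gauss :: 'a measure" "std_gauss :: 'b measure" ..
  have "(\<lambda>z. G (fst z) (snd z)) \<in> borel_measurable (std_gauss \<Otimes>\<^sub>M std_gauss)"
    using assms(1) measurable_cong_sets[OF sets_std_gauss_pair refl] by blast
  then have "integrable (std_gauss \<Otimes>\<^sub>M std_gauss) (\<lambda>(x, y). G x y)"
    using bound by (intro P.integrable_const_bound[where B=B]) (auto simp: case_prod_beta')
  then show ?thesis
    by (rule P.Fubini_integral)
qed

lemma (in pair_prob_space) distr_pair_snd: "distr (M1 \<Otimes>\<^sub>M M2) M2 snd = M2"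
proof (rule measure_eqI)
  fix A assume "A \<in> sets (distr (M1 \<Otimes>\<^sub>M M2) M2 snd)"
  then have A: "A \<in> sets M2" by simp
  then have "snd -` A \<inter> space (M1 \<Otimes>\<^sub>M M2) = space M1 \<times> A"
    using sets.sets_into_space by (auto simp: space_pair_measure)
  moreover have "emeasure (M1 \<Otimes>\<^sub>M M2) (space M1 \<times> A) = emeasure M1 (space M1) * emeasure M2 A"
    using A by (intro M2.emeasure_pair_measure_Times) auto
  ultimately show "emeasure (distr (M1 \<Otimes>\<^sub>M M2) M2 snd) A = emeasure M2 A"
    using A by (simp add: emeasure_distr M1.emeasure_space_1)
qed simp

lemma distr_std_gauss_rotation:
  fixes a b :: real
  assumes a: "0 < a" and b: "0 < b" and ab: "a\<^sup>2 + b\<^sup>2 = 1"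
  shows "distr (std_gauss \<Otimes>\<^sub>M std_gauss) borel (\<lambda>z. a * fst z + b * snd z) = std_gauss"
proof -
  interpret P: pair_prob_space "std_gauss :: real measure" "std_gauss :: real measure" ..
  let ?M = "(std_gauss :: real measure) \<Otimes>\<^sub>M (std_gauss :: real measure)"
  have distr_borel: "distr ?M borel X = distr ?M std_gauss X" for X :: "real \<times> real \<Rightarrow> real"
    by (rule distr_cong) simp_all
  have distr_lborel: "distr ?M lborel X = distr ?M borel X" for X :: "real \<times> real \<Rightarrow> real"
    by (rule distr_cong) simp_all
  have distr_fst: "distr ?M borel fst = std_gauss"
    unfolding distr_borel by (rule std_gauss.distr_pair_fst)
  have distr_snd: "distr ?M borel snd = std_gauss"
    unfolding distr_borel by (rule P.distr_pair_snd)
  have indep_fst_snd: "P.indep_var borel fst borel snd"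
  proof -
    have "distr ?M (borel \<Otimes>\<^sub>M borel) (\<lambda>z. (fst z, snd z)) = ?M"
    proof -
      have "sets (borel \<Otimes>\<^sub>M borel) = sets ?M"
        by (rule sets_pair_measure_cong) auto
      then show ?thesis using distr_id2[of "borel \<Otimes>\<^sub>M borel" ?M] by simp
    qed
    then show ?thesis
      unfolding P.indep_var_distribution_eq distr_fst distr_snd by simp
  qed
  have indep: "P.indep_var borel (\<lambda>z. a * fst z) borel (\<lambda>z. b * snd z)"
    using P.indep_var_compose[OF indep_fst_snd, of "\<lambda>v. a * v" borel "\<lambda>v. b * v" borel]
    by (simp add: comp_def)
  have "distributed ?M lborel fst std_normal_density"
    using distr_fst unfolding distributed_def distr_lborel by (simp add: std_gauss_real)
  then have "distributed ?M lborel (\<lambda>z. a * fst z) (normal_density 0 a)"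
    using P.normal_density_affine[of fst 0 1 a 0] a by simp
  moreover have "distributed ?M lborel snd std_normal_density"
    using distr_snd unfolding distributed_def distr_lborel by (simp add: std_gauss_real)
  then have "distributed ?M lborel (\<lambda>z. b * snd z) (normal_density 0 b)"
    using P.normal_density_affine[of snd 0 1 b 0] b by simp
  ultimately have "distributed ?M lborel (\<lambda>z. a * fst z + b * snd z) std_normal_density"
    using P.add_indep_normal[OF indep a b, of 0 0] ab by simp
  then show ?thesis
    unfolding distributed_def distr_lborel by (simp add: std_gauss_real)
qed

section \<open>The Ornstein-Uhlenbeck operator\<close>

lemma borel_measurable_OU [measurable]:
  assumes [measurable]: "h \<in> borel_measurable borel"
  shows "OU t h \<in> borel_measurable borel"
  unfolding OU_def by measurable

lemma abs_OU_le:
  assumes [measurable]: "h \<in> borel_measurable borel" and bound: "\<And>y. \<bar>h y\<bar> \<le> B"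
  shows "\<bar>OU t h x\<bar> \<le> B"
proof -
  let ?g = "\<lambda>y. h (exp (- t) *\<^sub>R x + sqrt (1 - exp (- 2 * t)) *\<^sub>R y)"
  have "integrable std_gauss ?g"
    using bound by (intro std_gauss.integrable_const_bound[where B=B]) auto
  then have "(\<integral>y. \<bar>?g y\<bar> \<partial>std_gauss) \<le> B"
    using bound by (intro std_gauss.integral_le_const) auto
  then show ?thesis
    unfolding OU_def using integral_abs_bound[of std_gauss ?g] by linarith
qed

lemma OU_0 [simp]: "OU 0 h x = h x"
  by (simp add: OU_def)

lemma OU_pair:
  fixes G :: "'a::euclidean_space \<times> 'b::euclidean_space \<Rightarrow> real"
  assumes [measurable]: "G \<in> borel_measurable borel" and bound: "\<And>z. \<bar>G z\<bar> \<le> B"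
  shows "OU t G (x, y) =
    (\<integral>x'. OU t (\<lambda>v. G (exp (- t) *\<^sub>R x + sqrt (1 - exp (- 2 * t)) *\<^sub>R x', v)) y \<partial>std_gauss)"
  unfolding OU_def using bound by (subst integral_std_gauss_pair[where B=B]) auto

lemma OU_comp_snd:
  fixes h :: "'b::euclidean_space \<Rightarrow> real"
  assumes [measurable]: "h \<in> borel_measurable borel" and bound: "\<And>v. \<bar>h v\<bar> \<le> B"
  shows "OU t (\<lambda>v. h (snd v)) (z :: 'a::euclidean_space \<times> 'b) = OU t h (snd z)"
proof -
  have "(\<lambda>v::'a \<times> 'b. h (snd v)) \<in> borel_measurable borel"
    unfolding borel_prod[symmetric] by measurable
  then show ?thesis
    using OU_pair[of "\<lambda>v. h (snd v)" B t "fst z" "snd z"] bound by simp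
qed

lemma integral_OU_std_gauss:
  fixes h :: "real \<Rightarrow> real"
  assumes [measurable]: "h \<in> borel_measurable borel" and bound: "\<And>v. \<bar>h v\<bar> \<le> B" and "0 \<le> t"
  shows "(\<integral>x. OU t h x \<partial>std_gauss) = (\<integral>v. h v \<partial>std_gauss)"
proof (cases "t = 0")
  case False
  define a where "a = exp (- t)"
  define b where "b = sqrt (1 - exp (- 2 * t))"
  have "exp (- 2 * t) < 1"
    using \<open>0 \<le> t\<close> False by simp
  then have rotation: "0 < a" "0 < b" "a\<^sup>2 + b\<^sup>2 = 1"
    by (simp_all add: a_def b_def power2_eq_square flip: exp_add)
  have "(\<integral>x. OU t h x \<partial>std_gauss) = (\<integral>z. h (a * fst z + b * snd z) \<partial>std_gauss)"
  proof -
    have "(\<lambda>z::real \<times> real. h (a * fst z + b * snd z)) \<in> borel_measurable borel"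
      unfolding borel_prod[symmetric] by measurable
    then show ?thesis
      unfolding OU_def a_def b_def using bound by (subst integral_std_gauss_pair[where B=B]) auto
  qed
  also have "\<dots> = (\<integral>z. h (a * fst z + b * snd z) \<partial>(std_gauss \<Otimes>\<^sub>M std_gauss))"
    by (simp only: std_gauss_pair)
  also have "\<dots> = (\<integral>v. h v \<partial>distr (std_gauss \<Otimes>\<^sub>M std_gauss) borel (\<lambda>z. a * fst z + b * snd z))"
    by (rule integral_distr[symmetric]) measurable
  also have "\<dots> = (\<integral>v. h v \<partial>std_gauss)"
    by (simp add: distr_std_gauss_rotation[OF rotation])
  finally show ?thesis .
qed simp

section \<open>Sampling a vertex of the simplex\<close>

lemma (in real_distribution) measure_cdf_le:
  assumes no_atoms: "\<And>x. prob {x} = 0" and s: "0 \<le> s" "s \<le> 1"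
  shows "prob {u. cdf M u \<le> s} = s"
proof (cases "s = 1")
  case True
  then have "{u. cdf M u \<le> s} = space M"
    using cdf_bounded_prob by auto
  then show ?thesis
    using True prob_space by simp
next
  case False
  let ?C = "{u. cdf M u \<le> s}"
  have cont: "continuous_on UNIV (cdf M)"
    using isCont_cdf no_atoms by (simp add: continuous_on_eq_continuous_at)
  from False s have "eventually (\<lambda>u. s < cdf M u) at_top"
    by (intro order_tendstoD(1)[OF cdf_lim_at_top_prob]) simp
  then obtain b where b: "\<And>u. b \<le> u \<Longrightarrow> s < cdf M u"
    by (auto simp: eventually_at_top_linorder)
  then have bdd: "bdd_above ?C"
    by (auto simp: bdd_above_def intro!: exI[of _ b] not_le_imp_less[THEN less_imp_le] dest: b)
  show ?thesis
  proof (cases "?C = {}")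
    case True
    then have "eventually (\<lambda>u. s \<le> cdf M u) at_bot"
      by (auto simp: not_le intro!: always_eventually less_imp_le)
    then have "s \<le> 0"
      by (rule tendsto_lowerbound[OF cdf_lim_at_bot _ trivial_limit_at_bot_linorder])
    with True s show ?thesis by simp
  next
    case False
    define c where "c = Sup ?C"
    have "c \<in> ?C"
      unfolding c_def by (rule closed_contains_Sup[OF False bdd closed_Collect_le[OF cont continuous_on_const]])
    then have C_eq: "?C = {..c}"
      using cSup_upper[OF _ bdd] cdf_nondecreasing by (fastforce simp: c_def)
    have "eventually (\<lambda>u. s \<le> cdf M u) (at_right c)"
      using C_eq by (intro eventually_mono[OF eventually_at_right_less[of c]]) (metis atMost_iff mem_Collect_eq nle_le not_le)
    then have "s \<le> cdf M c"
      by (rule tendsto_lowerbound[OF cdf_is_right_cont[of c, unfolded continuous_within] _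
            trivial_limit_at_right_real])
    moreover have "prob ?C = cdf M c"
      unfolding C_eq by (simp add: cdf_def2)
    ultimately show ?thesis
      using \<open>c \<in> ?C\<close> by simp
  qed
qed

lemma real_distribution_std_gauss: "real_distribution (std_gauss :: real measure)"
  by (simp add: real_distribution_def real_distribution_axioms_def std_gauss.prob_space_axioms)

lemma measure_std_gauss_singleton: "measure (std_gauss :: real measure) {x} = 0"
  unfolding std_gauss_def
  by (rule measure_eq_0_null_sets, subst null_sets_density_iff) (auto intro: AE_mp[OF AE_lborel_singleton[of x]])

lemma measure_cdf_std_gauss_le:
  "0 \<le> s \<Longrightarrow> s \<le> 1 \<Longrightarrow> measure std_gauss {u. cdf std_gauss u \<le> s} = s"
  by (rule real_distribution.measure_cdf_le[OF real_distribution_std_gauss measure_std_gauss_singleton])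

lemma borel_measurable_cdf_std_gauss [measurable (raw)]:
  assumes "U \<in> borel_measurable M"
  shows "(\<lambda>x. cdf std_gauss (U x)) \<in> borel_measurable M"
proof -
  interpret real_distribution "std_gauss :: real measure"
    by (rule real_distribution_std_gauss)
  have "cdf std_gauss \<in> borel_measurable borel"
    by (rule borel_measurable_mono) (simp add: mono_def cdf_nondecreasing)
  then show ?thesis
    using measurable_compose[OF assms] by blast
qed

lemma simplex_k_subset: "simplex_k \<subseteq> {p :: real^'k::finite. (\<forall>i. 0 \<le> p $ i) \<and> (\<Sum>i\<in>UNIV. p $ i) = 1}"
  unfolding simplex_k_def
proof (rule hull_minimal)
  show "range (\<lambda>i. axis i 1) \<subseteq> {p :: real^'k. (\<forall>i. 0 \<le> p $ i) \<and> (\<Sum>i\<in>UNIV. p $ i) = 1}"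
    by (auto simp: axis_def)
  show "convex {p :: real^'k. (\<forall>i. 0 \<le> p $ i) \<and> (\<Sum>i\<in>UNIV. p $ i) = 1}"
    by (auto simp: convex_def sum.distrib simp flip: sum_distrib_left)
qed

lemma norm_vertex: "v \<in> vertices_k \<Longrightarrow> norm v = 1"
  unfolding vertices_k_def by auto

lemma abs_vertex_nth_le: "v \<in> vertices_k \<Longrightarrow> \<bar>v $ i\<bar> \<le> 1"
  unfolding vertices_k_def by (auto simp: axis_def)

lemma borel_measurable_vec_nth [measurable (raw)]:
  fixes f :: "'a \<Rightarrow> real^'k::finite"
  shows "f \<in> borel_measurable M \<Longrightarrow> (\<lambda>x. f x $ i) \<in> borel_measurable M"
  using measurable_compose[of f M borel "\<lambda>v. v $ i" borel]
    borel_measurable_continuous_onI[OF linear_continuous_on[OF bounded_linear_vec_nth]]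
  by blast

abbreviation enum_pos :: "'k::finite \<Rightarrow> nat" where
  "enum_pos \<equiv> to_nat_on UNIV"

lemma bij_enum_pos: "bij_betw (enum_pos :: 'k::finite \<Rightarrow> nat) UNIV {..<CARD('k)}"
  by (rule to_nat_on_finite) simp

definition mass_before :: "real^'k::finite \<Rightarrow> 'k \<Rightarrow> real" where
  "mass_before p j = (\<Sum>i | enum_pos i < enum_pos j. p $ i)"

definition mass_upto :: "real^'k::finite \<Rightarrow> 'k \<Rightarrow> real" where
  "mass_upto p j = (\<Sum>i | enum_pos i \<le> enum_pos j. p $ i)"

definition first_reaching :: "real^'k::finite \<Rightarrow> real \<Rightarrow> 'k \<Rightarrow> bool" where
  "first_reaching p s j \<longleftrightarrow>
     s \<le> mass_upto p j \<and> (\<forall>i \<in> {i. enum_pos i < enum_pos j}. mass_upto p i < s)"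

text \<open>
  Coordinates are listed in the order \<open>enum_pos\<close>, so that \<open>[0,1]\<close> splits into consecutive
  intervals of lengths \<open>p $ j\<close>; \<open>round_vertex p s\<close> is the vertex of the interval containing
  the level \<open>s\<close>. For \<open>s > 1\<close> no interval qualifies and the value is \<open>0\<close>.
\<close>

definition round_vertex :: "real^'k::finite \<Rightarrow> real \<Rightarrow> real^'k" where
  "round_vertex p s = (\<Sum>j\<in>UNIV. of_bool (first_reaching p s j) *\<^sub>R axis j 1)"

lemma first_reaching_unique:
  assumes "first_reaching p s i" and "first_reaching p s j"
  shows "i = j"
proof (rule ccontr)
  assume "i \<noteq> j"
  then have "enum_pos i < enum_pos j \<or> enum_pos j < enum_pos i"
    using bij_betw_imp_inj_on[OF bij_enum_pos] by (metis inj_eq linorder_neqE_nat)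
  with assms show False
    unfolding first_reaching_def by force
qed

lemma first_reaching_exists:
  fixes p :: "real^'k::finite"
  assumes "(\<Sum>i\<in>UNIV. p $ i) = 1" and "s \<le> 1"
  shows "\<exists>j. first_reaching p s j"
proof -
  have "enum_pos i < CARD('k)" for i :: 'k
    using bij_betwE[OF bij_enum_pos] by blast
  then have "\<exists>last :: 'k. \<forall>i :: 'k. enum_pos i \<le> enum_pos last"
    using ex_has_greatest_nat[of "\<lambda>_. True" "undefined :: 'k" enum_pos "CARD('k)"] by simp
  then obtain last :: 'k where "\<forall>i :: 'k. enum_pos i \<le> enum_pos last" ..
  then have "{i :: 'k. enum_pos i \<le> enum_pos last} = UNIV"
    by blast
  then have "s \<le> mass_upto p last"
    using assms by (simp add: mass_upto_def)
  then obtain j where "s \<le> mass_upto p j" and "\<forall>i. s \<le> mass_upto p i \<longrightarrow> enum_pos j \<le> enum_pos i"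
    using ex_has_least_nat[of "\<lambda>i. s \<le> mass_upto p i" last enum_pos] by blast
  then have "first_reaching p s j"
    unfolding first_reaching_def by (auto simp: not_le[symmetric])
  then show ?thesis ..
qed

lemma mass_upto_eq_mass_before:
  "mass_upto p j = mass_before p j + p $ j"
proof -
  have "{i. enum_pos i \<le> enum_pos j} = insert j {i. enum_pos i < enum_pos j}"
    using bij_betw_imp_inj_on[OF bij_enum_pos] by (auto simp: le_less dest: injD)
  then show ?thesis
    by (simp add: mass_upto_def mass_before_def)
qed

lemma first_reaching_iff:
  fixes p :: "real^'k::finite"
  assumes nonneg: "\<And>i. 0 \<le> p $ i" and "0 < s"
  shows "first_reaching p s j \<longleftrightarrow> mass_before p j < s \<and> s \<le> mass_upto p j"
proof -
  have below: "mass_upto p i \<le> mass_before p j" if "enum_pos i < enum_pos j" for i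
    unfolding mass_upto_def mass_before_def using that nonneg by (intro sum_mono2) auto
  have "mass_before p j < s \<longleftrightarrow> (\<forall>i\<in>{i. enum_pos i < enum_pos j}. mass_upto p i < s)"
  proof (cases "enum_pos j")
    case 0
    then show ?thesis using \<open>0 < s\<close> by (simp add: mass_before_def)
  next
    case (Suc m)
    have "m \<in> enum_pos ` (UNIV :: 'k set)"
      using bij_betwE[OF bij_enum_pos] bij_betw_imp_surj_on[OF bij_enum_pos] Suc
      by (metis UNIV_I lessThan_iff Suc_lessD)
    then obtain i0 :: 'k where "enum_pos i0 = m"
      by blast
    with Suc have "mass_upto p i0 = mass_before p j"
      unfolding mass_upto_def mass_before_def by (metis less_Suc_eq_le)
    with below Suc \<open>enum_pos i0 = m\<close> show ?thesis
      by (metis le_less_trans lessI mem_Collect_eq)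
  qed
  then show ?thesis
    unfolding first_reaching_def by blast
qed

lemma round_vertex_eq_axis:
  assumes "first_reaching p s j"
  shows "round_vertex p s = axis j 1"
proof -
  have "round_vertex p s = (\<Sum>i\<in>UNIV. if i = j then axis i 1 else 0)"
    unfolding round_vertex_def using assms first_reaching_unique by (intro sum.cong) auto
  then show ?thesis
    by simp
qed

lemma round_vertex_in_vertices:
  assumes "p \<in> simplex_k" and "s \<le> 1"
  shows "round_vertex p s \<in> vertices_k"
proof -
  obtain j where "first_reaching p s j"
    using first_reaching_exists assms simplex_k_subset by blast
  then show ?thesis
    by (simp add: round_vertex_eq_axis vertices_k_def)
qed

lemma measurable_first_reaching [measurable (raw)]:
  assumes [measurable]: "F \<in> borel_measurable M" "S \<in> borel_measurable M"
  shows "Measurable.pred M (\<lambda>x. first_reaching (F x) (S x) j)"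
  unfolding first_reaching_def mass_upto_def by measurable

lemma borel_measurable_round_vertex [measurable (raw)]:
  assumes [measurable]: "F \<in> borel_measurable M" "S \<in> borel_measurable M"
  shows "(\<lambda>x. round_vertex (F x) (S x)) \<in> borel_measurable M"
  unfolding round_vertex_def by measurable

definition gauss_round :: "real^'k::finite \<Rightarrow> real \<Rightarrow> real^'k" where
  "gauss_round p u = round_vertex p (cdf std_gauss u)"

lemma borel_measurable_gauss_round [measurable (raw)]:
  assumes [measurable]: "F \<in> borel_measurable M" "U \<in> borel_measurable M"
  shows "(\<lambda>x. gauss_round (F x) (U x)) \<in> borel_measurable M"
  unfolding gauss_round_def by measurable

lemma gauss_round_in_vertices: "p \<in> simplex_k \<Longrightarrow> gauss_round p u \<in> vertices_k"
  unfolding gauss_round_def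
  by (intro round_vertex_in_vertices real_distribution.cdf_bounded_prob[OF real_distribution_std_gauss])

lemma measure_first_reaching_cdf_std_gauss:
  assumes p: "p \<in> simplex_k"
  shows "measure std_gauss {u. first_reaching p (cdf std_gauss u) j} = p $ j"
proof -
  let ?F = "cdf (std_gauss :: real measure)"
  have nonneg: "0 \<le> p $ i" for i
    using p simplex_k_subset by blast
  have "0 \<le> mass_before p j"
    unfolding mass_before_def using nonneg by (simp add: sum_nonneg)
  have "mass_upto p j \<le> (\<Sum>i\<in>UNIV. p $ i)"
    unfolding mass_upto_def using nonneg by (intro sum_mono2) auto
  then have "mass_upto p j \<le> 1"
    using p simplex_k_subset by auto
  have "{u. ?F u \<le> 0} \<in> null_sets std_gauss"
    using measure_cdf_std_gauss_le[of 0] by (auto simp: null_sets_def std_gauss.emeasure_eq_measure)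
  then have "AE u in std_gauss. 0 < ?F u"
    by (rule AE_I') auto
  then have "measure std_gauss {u. first_reaching p (?F u) j} =
      measure std_gauss ({u. ?F u \<le> mass_upto p j} - {u. ?F u \<le> mass_before p j})"
    by (intro measure_eq_AE) (auto simp: first_reaching_iff nonneg not_le)
  also have "\<dots> = measure std_gauss {u. ?F u \<le> mass_upto p j} - measure std_gauss {u. ?F u \<le> mass_before p j}"
    using nonneg[of j] by (intro std_gauss.finite_measure_Diff) (auto simp: mass_upto_eq_mass_before)
  also have "\<dots> = p $ j"
    using \<open>0 \<le> mass_before p j\<close> \<open>mass_upto p j \<le> 1\<close> nonneg[of j]
    by (simp add: measure_cdf_std_gauss_le mass_upto_eq_mass_before)
  finally show ?thesis .
qed

lemma integral_gauss_round:
  assumes p: "p \<in> simplex_k"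
  shows "(\<integral>u. gauss_round p u \<partial>std_gauss) = p"
proof -
  let ?A = "\<lambda>j. {u. first_reaching p (cdf std_gauss u) j}"
  have A: "?A j \<in> sets std_gauss" for j
    by measurable
  have "gauss_round p u = (\<Sum>j\<in>UNIV. indicator (?A j) u *\<^sub>R axis j 1)" for u
    by (simp add: gauss_round_def round_vertex_def indicator_def)
  then have "(\<integral>u. gauss_round p u \<partial>std_gauss) = (\<integral>u. (\<Sum>j\<in>UNIV. indicator (?A j) u *\<^sub>R axis j 1) \<partial>std_gauss)"
    by (simp only:)
  also have "\<dots> = (\<Sum>j\<in>UNIV. \<integral>u. indicator (?A j) u *\<^sub>R axis j 1 \<partial>std_gauss)"
    using A by (intro Bochner_Integration.integral_sum integrable_scaleR_left integrable_real_indicator)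
      (auto simp: std_gauss.emeasure_eq_measure)
  also have "\<dots> = (\<Sum>j\<in>UNIV. measure std_gauss (?A j) *\<^sub>R axis j 1)"
    using A by (simp add: std_gauss.emeasure_eq_measure)
  also have "\<dots> = p"
    using measure_first_reaching_cdf_std_gauss[OF p] basis_expansion[of p] by (simp add: scalar_mult_eq_scaleR)
  finally show ?thesis .
qed

lemma integral_gauss_round_nth:
  assumes "p \<in> simplex_k"
  shows "(\<integral>u. gauss_round p u $ i \<partial>std_gauss) = p $ i"
proof -
  have "integrable std_gauss (gauss_round p)"
    using assms by (intro std_gauss.integrable_const_bound[where B=1]) (auto simp: norm_vertex gauss_round_in_vertices)
  then show ?thesis
    using integral_bounded_linear[OF bounded_linear_vec_nth, of std_gauss "gauss_round p" i]
    by (simp add: integral_gauss_round[OF assms])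
qed

section \<open>Discretizing a pair of simplex-valued functions\<close>

definition discretize_fst :: "('a::euclidean_space \<Rightarrow> real^'k::finite) \<Rightarrow> 'a \<times> real \<times> real \<Rightarrow> real^'k" where
  "discretize_fst f z = gauss_round (f (fst z)) (fst (snd z))"

definition discretize_snd :: "('a::euclidean_space \<Rightarrow> real^'k::finite) \<Rightarrow> 'a \<times> real \<times> real \<Rightarrow> real^'k" where
  "discretize_snd g z = gauss_round (g (fst z)) (snd (snd z))"

lemma borel_measurable_discretize:
  assumes [measurable]: "f \<in> borel_measurable borel"
  shows "discretize_fst f \<in> borel_measurable borel" and "discretize_snd f \<in> borel_measurable borel"
  unfolding discretize_fst_def[abs_def] discretize_snd_def[abs_def] borel_prod[symmetric]
  by (rule borel_measurable_gauss_round; measurable)+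

lemma discretize_in_vertices:
  assumes "\<And>x. f x \<in> simplex_k"
  shows "discretize_fst f z \<in> vertices_k" and "discretize_snd f z \<in> vertices_k"
  unfolding discretize_fst_def discretize_snd_def using assms by (simp_all add: gauss_round_in_vertices)

lemma integral_discretize:
  fixes f :: "'a::euclidean_space \<Rightarrow> real^'k::finite"
  assumes [measurable]: "f \<in> borel_measurable borel" and simplex: "\<And>x. f x \<in> simplex_k"
  shows "(\<integral>z. discretize_fst f z \<partial>std_gauss) = (\<integral>x. f x \<partial>std_gauss)"
    and "(\<integral>z. discretize_snd f z \<partial>std_gauss) = (\<integral>x. f x \<partial>std_gauss)"
proof -
  have bound: "norm (gauss_round (f x) u) \<le> 1" for x u
    using simplex by (simp add: norm_vertex gauss_round_in_vertices)
  have inner_fst: "(\<integral>w. gauss_round (f x) (fst w) \<partial>(std_gauss :: (real \<times> real) measure)) = f x" for x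
    using bound simplex by (subst integral_std_gauss_fst[where B=1]) (auto simp: integral_gauss_round)
  have inner_snd: "(\<integral>w. gauss_round (f x) (snd w) \<partial>(std_gauss :: (real \<times> real) measure)) = f x" for x
    using bound simplex by (subst integral_std_gauss_snd[where B=1]) (auto simp: integral_gauss_round)
  show "(\<integral>z. discretize_fst f z \<partial>std_gauss) = (\<integral>x. f x \<partial>std_gauss)"
    using bound borel_measurable_discretize(1)[of f] unfolding discretize_fst_def[abs_def]
    by (subst integral_std_gauss_pair[where B=1]) (auto simp: inner_fst)
  show "(\<integral>z. discretize_snd f z \<partial>std_gauss) = (\<integral>x. f x \<partial>std_gauss)"
    using bound borel_measurable_discretize(2)[of f] unfolding discretize_snd_def[abs_def]
    by (subst integral_std_gauss_pair[where B=1]) (auto simp: inner_snd)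
qed

lemma OU_discretize_snd:
  fixes g :: "'a::euclidean_space \<Rightarrow> real^'k::finite"
  assumes [measurable]: "g \<in> borel_measurable borel" and simplex: "\<And>x. g x \<in> simplex_k"
  shows "OU t (\<lambda>z. discretize_snd g z $ l) (x, y) =
    (\<integral>x'. OU t (\<lambda>v. gauss_round (g (exp (- t) *\<^sub>R x + sqrt (1 - exp (- 2 * t)) *\<^sub>R x')) v $ l) (snd y) \<partial>std_gauss)"
proof -
  have bound: "\<bar>gauss_round (g x) v $ l\<bar> \<le> 1" for x v
    using simplex by (simp add: abs_vertex_nth_le gauss_round_in_vertices)
  have "(\<lambda>z::'a \<times> real \<times> real. gauss_round (g (fst z)) (snd (snd z)) $ l) \<in> borel_measurable borel"
    unfolding borel_prod[symmetric] by (rule borel_measurable_vec_nth, rule borel_measurable_gauss_round; measurable)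
  then show ?thesis
    unfolding discretize_snd_def using bound
    by (subst OU_pair[where B=1]) (auto intro!: Bochner_Integration.integral_cong OU_comp_snd[where B=1])
qed

lemma integral_OU_discretize_snd:
  fixes g :: "'a::euclidean_space \<Rightarrow> real^'k::finite"
  assumes [measurable]: "g \<in> borel_measurable borel" and simplex: "\<And>x. g x \<in> simplex_k" and "0 \<le> t"
  shows "(\<integral>y2. OU t (\<lambda>z. discretize_snd g z $ l) (x, y1, y2) \<partial>std_gauss) = OU t (\<lambda>x. g x $ l) x"
proof -
  define \<psi> where "\<psi> x' v = gauss_round (g (exp (- t) *\<^sub>R x + sqrt (1 - exp (- 2 * t)) *\<^sub>R x')) v $ l" for x' v
  have bound: "\<bar>\<psi> x' v\<bar> \<le> 1" for x' v
    using simplex by (simp add: \<psi>_def abs_vertex_nth_le gauss_round_in_vertices)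
  have [measurable]: "(\<lambda>z. \<psi> (fst z) (snd z)) \<in> borel_measurable borel"
    unfolding \<psi>_def borel_prod[symmetric]
    by (rule borel_measurable_vec_nth, rule borel_measurable_gauss_round; measurable)
  have [measurable]: "\<psi> x' \<in> borel_measurable borel" for x'
    unfolding \<psi>_def by (rule borel_measurable_vec_nth, rule borel_measurable_gauss_round; measurable)
  have "(\<integral>y2. OU t (\<lambda>z. discretize_snd g z $ l) (x, y1, y2) \<partial>std_gauss) =
      (\<integral>y2. \<integral>x'. OU t (\<psi> x') y2 \<partial>std_gauss \<partial>std_gauss)"
    unfolding \<psi>_def by (simp add: OU_discretize_snd simplex)
  also have "\<dots> = (\<integral>x'. \<integral>y2. OU t (\<psi> x') y2 \<partial>std_gauss \<partial>std_gauss)"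
  proof (rule integral_std_gauss_swap[where B=1])
    show "(\<lambda>z. OU t (\<psi> (fst z)) (snd z)) \<in> borel_measurable borel"
      unfolding OU_def \<psi>_def borel_prod[symmetric] by measurable
  qed (use bound in \<open>intro abs_OU_le, auto\<close>)
  also have "\<dots> = (\<integral>x'. \<integral>v. \<psi> x' v \<partial>std_gauss \<partial>std_gauss)"
    using bound \<open>0 \<le> t\<close> by (intro Bochner_Integration.integral_cong integral_OU_std_gauss[where B=1]) auto
  also have "\<dots> = OU t (\<lambda>x. g x $ l) x"
    using simplex by (simp add: \<psi>_def integral_gauss_round_nth OU_def)
  finally show ?thesis .
qed

lemma integral_discretize_OU:
  fixes f g :: "'a::euclidean_space \<Rightarrow> real^'k::finite"
  assumes [measurable]: "f \<in> borel_measurable borel" "g \<in> borel_measurable borel"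
    and f: "\<And>x. f x \<in> simplex_k" and g: "\<And>x. g x \<in> simplex_k" and "0 \<le> t"
  shows "(\<integral>z. discretize_fst f z $ j * OU t (\<lambda>z. discretize_snd g z $ l) z \<partial>std_gauss) =
    (\<integral>x. f x $ j * OU t (\<lambda>x. g x $ l) x \<partial>std_gauss)"
proof -
  let ?G = "\<lambda>z. discretize_snd g z $ l"
  have [measurable]: "?G \<in> borel_measurable borel"
    using borel_measurable_discretize(2)[of g] by measurable
  have bound_f: "\<bar>gauss_round (f x) u $ j\<bar> \<le> 1" for x u
    using f by (simp add: abs_vertex_nth_le gauss_round_in_vertices)
  have bound_G: "\<bar>OU t ?G z\<bar> \<le> 1" for z
    using g by (intro abs_OU_le) (auto simp: abs_vertex_nth_le discretize_in_vertices)
  have bound: "\<bar>gauss_round (f x) u $ j * OU t ?G z\<bar> \<le> 1" for x u z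
    using bound_f bound_G by (simp add: abs_mult mult_le_one)
  have inner: "(\<integral>w. gauss_round (f x) (fst w) $ j * OU t ?G (x, w) \<partial>std_gauss) = f x $ j * OU t (\<lambda>x. g x $ l) x" for x
  proof -
    have "(\<lambda>w::real \<times> real. gauss_round (f x) (fst w) $ j) \<in> borel_measurable borel"
      unfolding borel_prod[symmetric] by measurable
    moreover have "(\<lambda>w::real \<times> real. OU t ?G (x, w)) \<in> borel_measurable borel"
      by (rule measurable_compose[OF _ borel_measurable_OU]) (auto intro: borel_measurable_continuous_onI continuous_intros)
    ultimately have "(\<lambda>w::real \<times> real. gauss_round (f x) (fst w) $ j * OU t ?G (x, w)) \<in> borel_measurable borel"
      by measurable
    then have "(\<integral>w. gauss_round (f x) (fst w) $ j * OU t ?G (x, w) \<partial>std_gauss) =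
        (\<integral>y1. gauss_round (f x) y1 $ j * (\<integral>y2. OU t ?G (x, y1, y2) \<partial>std_gauss) \<partial>std_gauss)"
      using bound by (subst integral_std_gauss_pair[where B=1]) auto
    also have "\<dots> = (\<integral>y1. gauss_round (f x) y1 $ j \<partial>std_gauss) * OU t (\<lambda>x. g x $ l) x"
      using g \<open>0 \<le> t\<close> by (simp add: integral_OU_discretize_snd)
    also have "\<dots> = f x $ j * OU t (\<lambda>x. g x $ l) x"
      using f by (simp add: integral_gauss_round_nth)
    finally show ?thesis .
  qed
  have "(\<lambda>z. discretize_fst f z $ j * OU t ?G z) \<in> borel_measurable borel"
    using borel_measurable_discretize(1)[of f] by measurable
  then show ?thesis
    using bound unfolding discretize_fst_def
    by (subst integral_std_gauss_pair[where B=1]) (auto simp: inner)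
qed

theorem lemma3:
  fixes k_type :: "'k::finite itself" and n_type :: "'a::euclidean_space itself"
  shows "\<exists>(\<Phi> :: ('a \<Rightarrow> real ^ 'k) \<Rightarrow> ('a \<times> real \<times> real \<Rightarrow> real ^ 'k))
           (\<Psi> :: ('a \<Rightarrow> real ^ 'k) \<Rightarrow> ('a \<times> real \<times> real \<Rightarrow> real ^ 'k)).
     \<forall>f1 g1 :: 'a \<Rightarrow> real ^ 'k.
       f1 \<in> borel_measurable borel \<and> g1 \<in> borel_measurable borel \<and>
       (\<forall>x. f1 x \<in> simplex_k) \<and> (\<forall>x. g1 x \<in> simplex_k) \<longrightarrow>
       (let f2 = \<Phi> f1; g2 = \<Psi> g1 in
         f2 \<in> borel_measurable borel \<and> g2 \<in> borel_measurable borel \<and>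
         (\<forall>x. f2 x \<in> vertices_k) \<and> (\<forall>x. g2 x \<in> vertices_k) \<and>
         (\<integral>x. f2 x \<partial>std_gauss) = (\<integral>x. f1 x \<partial>std_gauss) \<and>
         (\<integral>x. g2 x \<partial>std_gauss) = (\<integral>x. g1 x \<partial>std_gauss) \<and>
         (\<forall>t\<ge>0. \<forall>j l.
            (\<integral>x. f1 x $ j * OU t (\<lambda>y. g1 y $ l) x \<partial>std_gauss) =
            (\<integral>x. f2 x $ j * OU t (\<lambda>y. g2 y $ l) x \<partial>std_gauss)))"
  by (intro exI[of _ discretize_fst] exI[of _ discretize_snd] allI impI)
    (auto simp: Let_def borel_measurable_discretize discretize_in_vertices integral_discretize
      integral_discretize_OU)

end
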